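(* Let $a\in C\ell_{1,2}$. Then there is a unique $x\in C\ell_{1,2}$ satisfying $axa=a$, $xax=x$, $(ax)'=ax$ and $(xa)'=xa$.
   Context: $C\ell_{1,2}$ is the real Clifford algebra generated by $i_1,i_2,i_3$ with $i_1^2=1$, $i_2^2=i_3^2=-1$ and $i_ti_m=-i_mi_t$ for $t\neq m$, with real basis $e_0=1$, $e_1=i_1$, $e_2=i_2$, $e_3=i_1i_2$, $e_4=i_3$, $e_5=i_1i_3$, $e_6=i_2i_3$, $e_7=i_1i_2i_3$. For $a=\sum_{t=0}^7 a_te_t$ the prime is $a'=a_0+a_1e_1-a_2e_2+a_3e_3-a_4e_4+a_5e_5-a_6e_6-a_7e_7$. *)

theory Defs
  imports Complex_Main
begin

text \<open>An element is a coefficient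
  function on the basis indices 0..7 (zero outside); basis index t encodes the
  monomial whose generators are given by the binary digits of t:
  bit 0 = i1, bit 1 = i2, bit 2 = i3 (generators in increasing order).
  So e0=1, e1=i1, e2=i2, e3=i1i2, e4=i3, e5=i1i3, e6=i2i3, e7=i1i2i3.\<close>

definition cl12 :: "(nat \<Rightarrow> real) set" where
  "cl12 = {a. \<forall>n\<ge>8. a n = 0}"

definition inb :: "nat \<Rightarrow> nat \<Rightarrow> bool" where
  "inb t j = odd (t div 2 ^ j)"

definition gsq :: "nat \<Rightarrow> real" where
  "gsq j = (if j = 0 then 1 else -1)"

text \<open>index of the monomial obtained as symmetric difference\<close>
definition bxor :: "nat \<Rightarrow> nat \<Rightarrow> nat" where
  "bxor s t = (\<Sum>j<3. if inb s j \<noteq> inb t j then 2 ^ j else 0)"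

text \<open>sign in e_s e_t = bsign s t * e_(bxor s t), from anticommutation and squares\<close>
definition bsign :: "nat \<Rightarrow> nat \<Rightarrow> real" where
  "bsign s t = (-1) ^ card {(j, k). j < 3 \<and> k < 3 \<and> inb s j \<and> inb t k \<and> k < j}
     * (\<Prod>j\<in>{j. j < 3 \<and> inb s j \<and> inb t j}. gsq j)"

definition clmul :: "(nat \<Rightarrow> real) \<Rightarrow> (nat \<Rightarrow> real) \<Rightarrow> (nat \<Rightarrow> real)" (infixl "\<star>" 70) where
  "clmul a b = (\<lambda>r. if r < 8 then
      (\<Sum>s<8. \<Sum>t<8. if bxor s t = r then bsign s t * a s * b t else 0) else 0)"

definition clprime :: "(nat \<Rightarrow> real) \<Rightarrow> (nat \<Rightarrow> real)" where
  "clprime a = (\<lambda>t. (if t \<in> {2, 4, 6, 7} then -1 else 1) * a t)"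

end

theory Submission
  imports Defs
begin

(* Uniqueness is the classical Moore-Penrose argument and only uses that the prime reverses
   products. For existence, let \<open>d = a \<star> cl_conj a\<close> with the Clifford conjugate \<open>cl_conj\<close>.
   Then \<open>d\<close> lies in the centre, spanned by 1 and \<open>e\<^sub>7\<close> with \<open>e\<^sub>7\<^sup>2 = -1\<close>. If \<open>d \<noteq> 0\<close>, it is
   invertible there, hence \<open>a\<close> is invertible and its inverse is the Moore-Penrose inverse.
   If \<open>d = 0\<close> and \<open>a \<noteq> 0\<close>, then \<open>a a' a = 2 |a|\<^sup>2 a\<close> with \<open>|a|\<^sup>2 = \<Sum>\<^sub>t a\<^sub>t\<^sup>2 > 0\<close>, so \<open>a' / (2 |a|\<^sup>2)\<close>
   works. Under \<open>Cl\<^sub>1\<^sub>,\<^sub>2 \<cong> M\<^sub>2(\<complex>)\<close> the prime is the conjugate transpose, the Clifford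
   conjugate the adjugate, and \<open>d\<close> the determinant. *)

locale semigroup_anti_hom = semigroup +
  fixes \<sigma> :: "'a \<Rightarrow> 'a"
  assumes anti_hom: "\<sigma> (a \<^bold>* b) = \<sigma> b \<^bold>* \<sigma> a"
begin

definition moore_penrose :: "'a \<Rightarrow> 'a \<Rightarrow> bool" where
  "moore_penrose a x \<longleftrightarrow> a \<^bold>* x \<^bold>* a = a \<and> x \<^bold>* a \<^bold>* x = x
     \<and> \<sigma> (a \<^bold>* x) = a \<^bold>* x \<and> \<sigma> (x \<^bold>* a) = x \<^bold>* a"

lemma moore_penrose_unique:
  assumes "moore_penrose a x" and "moore_penrose a y"
  shows "x = y"
proof -
  have x1: "a \<^bold>* x \<^bold>* a = a" and x2: "x \<^bold>* a \<^bold>* x = x"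
    and x3: "\<sigma> (a \<^bold>* x) = a \<^bold>* x" and x4: "\<sigma> (x \<^bold>* a) = x \<^bold>* a"
    using assms(1) unfolding moore_penrose_def by auto
  have y1: "a \<^bold>* y \<^bold>* a = a" and y2: "y \<^bold>* a \<^bold>* y = y"
    and y3: "\<sigma> (a \<^bold>* y) = a \<^bold>* y" and y4: "\<sigma> (y \<^bold>* a) = y \<^bold>* a"
    using assms(2) unfolding moore_penrose_def by auto
  have \<sigma>_a: "\<sigma> a = \<sigma> a \<^bold>* \<sigma> z \<^bold>* \<sigma> a" if "a \<^bold>* z \<^bold>* a = a" for z
    using arg_cong[OF that, of \<sigma>] by (simp add: anti_hom assoc)
  have "x = x \<^bold>* \<sigma> (a \<^bold>* x)"
    using x2 x3 by (simp add: assoc)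
  also have "\<dots> = x \<^bold>* (\<sigma> x \<^bold>* (\<sigma> a \<^bold>* \<sigma> y \<^bold>* \<sigma> a))"
    by (subst \<sigma>_a[OF y1, symmetric]) (simp add: anti_hom)
  also have "\<dots> = x \<^bold>* \<sigma> (a \<^bold>* x) \<^bold>* \<sigma> (a \<^bold>* y)"
    by (simp add: anti_hom assoc)
  also have "\<dots> = x \<^bold>* a \<^bold>* y"
    using x2 x3 y3 by (simp add: assoc)
  finally have x_eq: "x = x \<^bold>* a \<^bold>* y" .
  have "y = \<sigma> (y \<^bold>* a) \<^bold>* y"
    using y2 y4 by simp
  also have "\<dots> = \<sigma> a \<^bold>* \<sigma> x \<^bold>* \<sigma> a \<^bold>* \<sigma> y \<^bold>* y"
    by (subst \<sigma>_a[OF x1, symmetric]) (simp add: anti_hom)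
  also have "\<dots> = \<sigma> (x \<^bold>* a) \<^bold>* \<sigma> (y \<^bold>* a) \<^bold>* y"
    by (simp add: anti_hom assoc)
  also have "\<dots> = x \<^bold>* a \<^bold>* y"
    using x4 y4 y2 by (simp add: assoc)
  finally show ?thesis
    using x_eq by simp
qed

end

definition cl_one :: "nat \<Rightarrow> real" where
  "cl_one r = (if r = 0 then 1 else 0)"

definition cl_scale :: "real \<Rightarrow> (nat \<Rightarrow> real) \<Rightarrow> nat \<Rightarrow> real" where
  "cl_scale c a r = c * a r"

definition cl_conj :: "(nat \<Rightarrow> real) \<Rightarrow> nat \<Rightarrow> real" where
  "cl_conj a r = (if r \<in> {1, 2, 3, 4, 5, 6} then -1 else 1) * a r"

lemma bsign_conv_sums:
  "bsign s t = (-1) ^ (\<Sum>j<3. \<Sum>k<j. of_bool (inb s j \<and> inb t k))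
     * (\<Prod>j<3. if inb s j \<and> inb t j then gsq j else 1)"
proof -
  have inversions: "{(j, k). j < 3 \<and> k < 3 \<and> inb s j \<and> inb t k \<and> k < j}
      = (SIGMA j:{..<3}. {..<j} \<inter> {k. inb s j \<and> inb t k})"
    by auto
  have squares: "{j. j < 3 \<and> inb s j \<and> inb t j} = {j \<in> {..<3}. inb s j \<and> inb t j}"
    by auto
  have "card {(j, k). j < 3 \<and> k < 3 \<and> inb s j \<and> inb t k \<and> k < j}
      = (\<Sum>j<3. \<Sum>k<j. of_bool (inb s j \<and> inb t k))"
    unfolding inversions by simp
  moreover have "(\<Prod>j | j < 3 \<and> inb s j \<and> inb t j. gsq j)
      = (\<Prod>j<3. if inb s j \<and> inb t j then gsq j else 1)"
    unfolding squares by (rule prod.inter_filter) simp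
  ultimately show ?thesis
    unfolding bsign_def by simp
qed

lemma clmul_coeffs:
  "(a \<star> b) 0 = a 0 * b 0 + a 1 * b 1 - a 2 * b 2 + a 3 * b 3 - a 4 * b 4 + a 5 * b 5 - a 6 * b 6 - a 7 * b 7"
  "(a \<star> b) 1 = a 0 * b 1 + a 1 * b 0 + a 2 * b 3 - a 3 * b 2 + a 4 * b 5 - a 5 * b 4 - a 6 * b 7 - a 7 * b 6"
  "(a \<star> b) 2 = a 0 * b 2 + a 1 * b 3 + a 2 * b 0 - a 3 * b 1 + a 4 * b 6 - a 5 * b 7 - a 6 * b 4 - a 7 * b 5"
  "(a \<star> b) 3 = a 0 * b 3 + a 1 * b 2 - a 2 * b 1 + a 3 * b 0 - a 4 * b 7 + a 5 * b 6 - a 6 * b 5 - a 7 * b 4"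
  "(a \<star> b) 4 = a 0 * b 4 + a 1 * b 5 - a 2 * b 6 + a 3 * b 7 + a 4 * b 0 - a 5 * b 1 + a 6 * b 2 + a 7 * b 3"
  "(a \<star> b) 5 = a 0 * b 5 + a 1 * b 4 + a 2 * b 7 - a 3 * b 6 - a 4 * b 1 + a 5 * b 0 + a 6 * b 3 + a 7 * b 2"
  "(a \<star> b) 6 = a 0 * b 6 + a 1 * b 7 + a 2 * b 4 - a 3 * b 5 - a 4 * b 2 + a 5 * b 3 + a 6 * b 0 + a 7 * b 1"
  "(a \<star> b) 7 = a 0 * b 7 + a 1 * b 6 - a 2 * b 5 + a 3 * b 4 + a 4 * b 3 - a 5 * b 2 + a 6 * b 1 + a 7 * b 0"
  by (simp_all add: clmul_def lessThan_nat_numeral bsign_conv_sums bxor_def inb_def gsq_def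
      del: sum_of_bool_eq)

(* Keeps the index 1 a numeral, so that the coefficient lemmas apply as rewrite rules. *)
declare One_nat_def [simp del]

lemma clmul_in_cl12 [simp]: "a \<star> b \<in> cl12"
  by (simp add: cl12_def clmul_def)

lemma clprime_in_cl12 [simp]: "a \<in> cl12 \<Longrightarrow> clprime a \<in> cl12"
  by (simp add: cl12_def clprime_def)

lemma cl_scale_in_cl12 [simp]: "a \<in> cl12 \<Longrightarrow> cl_scale c a \<in> cl12"
  by (simp add: cl12_def cl_scale_def)

lemma diff_in_cl12 [simp]: "a \<in> cl12 \<Longrightarrow> b \<in> cl12 \<Longrightarrow> a - b \<in> cl12"
  by (simp add: cl12_def)

lemma zero_in_cl12 [simp]: "(\<lambda>_. 0) \<in> cl12"
  by (simp add: cl12_def)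

lemma cl_one_in_cl12 [simp]: "cl_one \<in> cl12"
  by (simp add: cl12_def cl_one_def)

lemma cl12_eqI:
  assumes "a \<in> cl12" "b \<in> cl12"
    and "a 0 = b 0" "a 1 = b 1" "a 2 = b 2" "a 3 = b 3" "a 4 = b 4" "a 5 = b 5" "a 6 = b 6" "a 7 = b 7"
  shows "a = b"
proof
  fix r
  show "a r = b r"
  proof (cases "r < 8")
    case True
    then have "r \<in> {0, 1, 2, 3, 4, 5, 6, 7}" by auto
    then show ?thesis using assms(3-) by auto
  next
    case False
    then show ?thesis using assms(1,2) by (simp add: cl12_def)
  qed
qed

lemma clprime_coeffs:
  "clprime a 0 = a 0" "clprime a 1 = a 1" "clprime a 2 = - a 2" "clprime a 3 = a 3"
  "clprime a 4 = - a 4" "clprime a 5 = a 5" "clprime a 6 = - a 6" "clprime a 7 = - a 7"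
  by (simp_all add: clprime_def)

lemma cl_conj_coeffs:
  "cl_conj a 0 = a 0" "cl_conj a 1 = - a 1" "cl_conj a 2 = - a 2" "cl_conj a 3 = - a 3"
  "cl_conj a 4 = - a 4" "cl_conj a 5 = - a 5" "cl_conj a 6 = - a 6" "cl_conj a 7 = a 7"
  by (simp_all add: cl_conj_def)

lemma clmul_assoc: "a \<star> b \<star> c = a \<star> (b \<star> c)"
  by (rule cl12_eqI) (simp_all add: clmul_coeffs algebra_simps)

lemma clprime_clmul: "clprime (a \<star> b) = clprime b \<star> clprime a"
  by (rule cl12_eqI) (simp_all add: clmul_coeffs clprime_coeffs algebra_simps)

interpretation cl: semigroup_anti_hom clmul clprime
  by unfold_locales (fact clmul_assoc, fact clprime_clmul)

lemma clprime_clprime [simp]: "clprime (clprime a) = a"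
  by (simp add: fun_eq_iff clprime_def)

lemma clprime_cl_one [simp]: "clprime cl_one = cl_one"
  by (simp add: fun_eq_iff clprime_def cl_one_def)

lemma clprime_cl_scale [simp]: "clprime (cl_scale c a) = cl_scale c (clprime a)"
  by (simp add: fun_eq_iff clprime_def cl_scale_def)

lemma cl_scale_cl_scale [simp]: "cl_scale c (cl_scale d a) = cl_scale (c * d) a"
  by (simp add: fun_eq_iff cl_scale_def)

lemma cl_scale_one [simp]: "cl_scale 1 a = a"
  by (simp add: fun_eq_iff cl_scale_def)

lemma clmul_cl_scale_left [simp]: "cl_scale c a \<star> b = cl_scale c (a \<star> b)"
  by (rule cl12_eqI) (simp_all add: clmul_coeffs cl_scale_def algebra_simps)

lemma clmul_cl_scale_right [simp]: "a \<star> cl_scale c b = cl_scale c (a \<star> b)"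
  by (rule cl12_eqI) (simp_all add: clmul_coeffs cl_scale_def algebra_simps)

lemma cl_one_clmul [simp]: "a \<in> cl12 \<Longrightarrow> cl_one \<star> a = a"
  by (rule cl12_eqI) (simp_all add: clmul_coeffs cl_one_def)

lemma cl_conj_clmul_commute: "cl_conj a \<star> a = a \<star> cl_conj a"
  by (rule cl12_eqI) (simp_all add: clmul_coeffs cl_conj_coeffs algebra_simps)

lemma clmul_cl_conj_noncentral_coeff:
  assumes "r \<notin> {0, 7}"
  shows "(a \<star> cl_conj a) r = 0"
proof (cases "r < 8")
  case True
  with assms have "r \<in> {1, 2, 3, 4, 5, 6}" by auto
  then show ?thesis
    by (auto simp: clmul_coeffs cl_conj_coeffs algebra_simps)
next
  case False
  then show ?thesis by (simp add: clmul_def)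
qed

lemma central_clmul_commute:
  assumes "\<And>r. r \<notin> {0, 7} \<Longrightarrow> z r = 0"
  shows "z \<star> b = b \<star> z"
proof -
  have "z 1 = 0" "z 2 = 0" "z 3 = 0" "z 4 = 0" "z 5 = 0" "z 6 = 0"
    using assms by simp_all
  then show ?thesis
    by (intro cl12_eqI) (simp_all add: clmul_coeffs algebra_simps)
qed

lemma clmul_inverse_exists:
  assumes "a \<star> cl_conj a \<noteq> (\<lambda>_. 0)"
  shows "\<exists>x\<in>cl12. a \<star> x = cl_one \<and> x \<star> a = cl_one"
proof -
  define d where "d = a \<star> cl_conj a"
  define n where "n = d 0 ^ 2 + d 7 ^ 2"
  have d_central: "d r = 0" if "r \<notin> {0, 7}" for r
    using clmul_cl_conj_noncentral_coeff[OF that] by (simp add: d_def)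
  have "n \<noteq> 0"
  proof
    assume "n = 0"
    then have "d 0 = 0" "d 7 = 0"
      by (simp_all add: n_def sum_power2_eq_zero_iff)
    with d_central have "d = (\<lambda>_. 0)"
      by (metis insertE singletonD)
    with assms show False
      by (simp add: d_def)
  qed
  \<comment> \<open>the inverse of \<open>d = d\<^sub>0 + d\<^sub>7 e\<^sub>7\<close> in the centre, where \<open>e\<^sub>7\<^sup>2 = -1\<close>\<close>
  define z where "z r = (if r = 0 then d 0 / n else if r = 7 then - d 7 / n else 0)" for r :: nat
  have z_central: "z r = 0" if "r \<notin> {0, 7}" for r
    using that by (simp add: z_def)
  have "d 1 = 0" "d 2 = 0" "d 3 = 0" "d 4 = 0" "d 5 = 0" "d 6 = 0"
    by (simp_all add: d_central)
  with \<open>n \<noteq> 0\<close> have dz: "d \<star> z = cl_one"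
    by (intro cl12_eqI) (simp_all add: clmul_coeffs z_def cl_one_def n_def
        power2_eq_square add_divide_distrib[symmetric])
  define x where "x = cl_conj a \<star> z"
  have "a \<star> x = cl_one"
    using dz by (simp add: x_def d_def clmul_assoc[symmetric])
  moreover have "x \<star> a = cl_one"
  proof -
    have "x \<star> a = cl_conj a \<star> (z \<star> a)"
      by (simp add: x_def clmul_assoc)
    also have "\<dots> = cl_conj a \<star> (a \<star> z)"
      using central_clmul_commute[of z a] z_central by simp
    also have "\<dots> = d \<star> z"
      by (simp add: d_def cl_conj_clmul_commute flip: clmul_assoc)
    finally show ?thesis
      using dz by simp
  qed
  ultimately show ?thesis
    by (auto simp: x_def)
qed

lemma zero_clmul [simp]: "(\<lambda>_. 0) \<star> b = (\<lambda>_. 0)"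
  by (rule cl12_eqI) (simp_all add: clmul_coeffs)

(* The 2x2 matrix identity \<open>A A\<^sup>\<dagger> A = tr (A\<^sup>\<dagger> A) A - det A adj (A\<^sup>\<dagger>)\<close>. *)
lemma clmul_clprime_clmul:
  assumes "a \<in> cl12"
  shows "a \<star> clprime a \<star> a
    = cl_scale (2 * (clprime a \<star> a) 0) a - a \<star> cl_conj a \<star> cl_conj (clprime a)"
  using assms by (intro cl12_eqI) (simp_all add: clmul_coeffs clprime_coeffs cl_conj_coeffs
      cl_scale_def algebra_simps)

lemma clprime_clmul_self_scalar: "(clprime a \<star> a) 0 = (\<Sum>t<8. a t ^ 2)"
  by (simp add: clmul_coeffs clprime_coeffs power2_eq_square) (simp add: lessThan_nat_numeral One_nat_def)

lemma clprime_clmul_self_scalar_pos: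
  assumes "a \<in> cl12" and "a \<noteq> (\<lambda>_. 0)"
  shows "(clprime a \<star> a) 0 > 0"
proof -
  obtain r where "a r \<noteq> 0"
    using assms(2) by auto
  moreover from this have "r < 8"
    using assms(1) by (simp add: cl12_def) (metis not_less)
  ultimately show ?thesis
    unfolding clprime_clmul_self_scalar by (intro sum_pos2[of _ r]) auto
qed

lemma moore_penrose_of_conj_zero:
  assumes "a \<in> cl12" and "a \<star> cl_conj a = (\<lambda>_. 0)" and "a \<noteq> (\<lambda>_. 0)"
  shows "cl.moore_penrose a (cl_scale (1 / (2 * (clprime a \<star> a) 0)) (clprime a))"
proof -
  define c where "c = 2 * (clprime a \<star> a) 0"
  have "c \<noteq> 0"
    using clprime_clmul_self_scalar_pos[OF assms(1,3)] by (simp add: c_def)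
  have aa'a: "a \<star> clprime a \<star> a = cl_scale c a"
    using clmul_clprime_clmul[OF assms(1)] assms(2) by (simp add: c_def fun_diff_def)
  have a'aa': "clprime a \<star> a \<star> clprime a = cl_scale c (clprime a)"
    using arg_cong[OF aa'a, of clprime] by (simp add: clprime_clmul clmul_assoc)
  show ?thesis
    using \<open>c \<noteq> 0\<close> aa'a a'aa'
    by (simp add: cl.moore_penrose_def clprime_clmul flip: c_def)
qed

lemma moore_penrose_exists:
  assumes "a \<in> cl12"
  shows "\<exists>x\<in>cl12. cl.moore_penrose a x"
proof (cases "a \<star> cl_conj a = (\<lambda>_. 0)")
  case False
  then obtain x where "x \<in> cl12" "a \<star> x = cl_one" "x \<star> a = cl_one"
    using clmul_inverse_exists by blast
  with assms show ?thesis
    by (intro bexI[of _ x]) (simp_all add: cl.moore_penrose_def flip: clmul_assoc)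
next
  case null: True
  show ?thesis
  proof (cases "a = (\<lambda>_. 0)")
    case True
    have "clprime (\<lambda>_. 0) = (\<lambda>_. 0)"
      by (simp add: clprime_def)
    with True show ?thesis
      by (auto simp: cl.moore_penrose_def intro: bexI[of _ "\<lambda>_. 0"])
  next
    case False
    with assms null show ?thesis
      using moore_penrose_of_conj_zero cl_scale_in_cl12 clprime_in_cl12 by blast
  qed
qed

theorem lemma3p1:
  assumes "a \<in> cl12"
  shows "\<exists>!x. x \<in> cl12 \<and> a \<star> x \<star> a = a \<and> x \<star> a \<star> x = x
           \<and> clprime (a \<star> x) = a \<star> x \<and> clprime (x \<star> a) = x \<star> a"
proof -
  have "\<exists>!x. x \<in> cl12 \<and> cl.moore_penrose a x"
    using moore_penrose_exists[OF assms] cl.moore_penrose_unique by blast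
  then show ?thesis
    unfolding cl.moore_penrose_def .
qed

end
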